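(* Let $G$ be a graph, $\ell$ a non-negative integer, and let $G'$ be the graph constructed from $G$ as described in the context. If $(G,\ell)$ is a Yes-instance of \textsc{Edge Induced Forest}, then $(G',4\ell,3\ell)$ is a Yes-instance of \textsc{Contraction(vc)}.
   Context: All graphs are finite, simple and undirected. Construction of $G'$ from $G$: for every vertex $u\in V(G)$ add two vertices $z_u,p_u$ and the edge $z_up_u$. For every edge $uv\in E(G)$ add seven vertices $y^a_{uv},y^b_{uv},y^c_{uv},w^1_{uv},w^2_{uv},p^1_{uv},p^2_{uv}$ and the edges $z_uy^c_{uv}$, $z_vy^c_{uv}$, $y^a_{uv}y^b_{uv}$, $y^a_{uv}y^c_{uv}$, $y^b_{uv}w^1_{uv}$, $y^b_{uv}w^2_{uv}$, $w^1_{uv}p^1_{uv}$, $w^2_{uv}p^2_{uv}$. No other vertices or edges. \textsc{Edge Induced Forest}: given $(G,\ell)$, decide whether there is a set $F$ of at least $\ell$ edges with $G[V(F)]$ a forest, where $V(F)$ is the set of endpoints of $F$. $\mathrm{vc}(H)$ is the minimum size of a vertex cover of $H$; $H/F$ denotes the graph obtained by contracting the edges of $F$ (contracting $uv$ deletes $u,v$ and adds a new vertex adjacent to $(N(u)\cup N(v))\setminus\{u,v\}$, without loops or parallel edges). $(H,k,d)$ is a Yes-instance of \textsc{Contraction(vc)} iff there exists $F\subseteq E(H)$ with $|F|\le k$ and $\mathrm{vc}(H/F)\le\mathrm{vc}(H)-d$. *)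

theory Defs
  imports Main
begin

definition graph :: "'a set \<Rightarrow> 'a set set \<Rightarrow> bool" where
  "graph V E \<longleftrightarrow> finite V \<and> (\<forall>e\<in>E. \<exists>u v. e = {u, v} \<and> u \<noteq> v \<and> u \<in> V \<and> v \<in> V)"

definition is_cycle :: "'a set set \<Rightarrow> 'a list \<Rightarrow> bool" where
  "is_cycle E vs \<longleftrightarrow> length vs \<ge> 3 \<and> distinct vs \<and>
     (\<forall>i < length vs. {vs ! i, vs ! ((i + 1) mod length vs)} \<in> E)"

definition forest :: "'a set \<Rightarrow> 'a set set \<Rightarrow> bool" where
  "forest V E \<longleftrightarrow> \<not> (\<exists>vs. set vs \<subseteq> V \<and> is_cycle E vs)"

definition induced_edges :: "'a set set \<Rightarrow> 'a set \<Rightarrow> 'a set set" where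
  "induced_edges E S = {e \<in> E. e \<subseteq> S}"

definition edge_induced_forest :: "'a set \<Rightarrow> 'a set set \<Rightarrow> nat \<Rightarrow> bool" where
  "edge_induced_forest V E l \<longleftrightarrow>
     (\<exists>F \<subseteq> E. card F \<ge> l \<and> forest (\<Union>F) (induced_edges E (\<Union>F)))"

definition vertex_cover :: "'a set \<Rightarrow> 'a set set \<Rightarrow> 'a set \<Rightarrow> bool" where
  "vertex_cover V E C \<longleftrightarrow> C \<subseteq> V \<and> (\<forall>e\<in>E. e \<inter> C \<noteq> {})"

definition vc :: "'a set \<Rightarrow> 'a set set \<Rightarrow> nat" where
  "vc V E = Min {card C | C. vertex_cover V E C}"

text \<open>Contraction of an edge set F: vertices of H/F are the connected components
  of the spanning subgraph (V, F); two components are adjacent iff some edge of H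
  joins them (no loops, no parallel edges).\<close>
definition ccomp :: "'a set set \<Rightarrow> 'a \<Rightarrow> 'a set" where
  "ccomp F x = {y. (x, y) \<in> {(a, b). {a, b} \<in> F}\<^sup>*}"

definition contract_V :: "'a set \<Rightarrow> 'a set set \<Rightarrow> 'a set set" where
  "contract_V V F = ccomp F ` V"

definition contract_E :: "'a set set \<Rightarrow> 'a set set \<Rightarrow> 'a set set set" where
  "contract_E E F = {{ccomp F x, ccomp F y} | x y. {x, y} \<in> E \<and> ccomp F x \<noteq> ccomp F y}"

definition contraction_vc :: "'a set \<Rightarrow> 'a set set \<Rightarrow> nat \<Rightarrow> nat \<Rightarrow> bool" where
  "contraction_vc V E k d \<longleftrightarrow>
     (\<exists>F \<subseteq> E. card F \<le> k \<and>
        int (vc (contract_V V F) (contract_E E F)) \<le> int (vc V E) - int d)"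

datatype 'a node = Zv 'a | Pv 'a
  | Ya "'a set" | Yb "'a set" | Yc "'a set"
  | W1 "'a set" | W2 "'a set" | P1 "'a set" | P2 "'a set"

definition constr_V :: "'a set \<Rightarrow> 'a set set \<Rightarrow> 'a node set" where
  "constr_V V E = Zv ` V \<union> Pv ` V \<union>
     (\<Union>e\<in>E. {Ya e, Yb e, Yc e, W1 e, W2 e, P1 e, P2 e})"

definition constr_E :: "'a set \<Rightarrow> 'a set set \<Rightarrow> 'a node set set" where
  "constr_E V E = {{Zv u, Pv u} | u. u \<in> V} \<union>
     (\<Union>e\<in>E. {{Zv u, Yc e} | u. u \<in> e} \<union>
        {{Ya e, Yb e}, {Ya e, Yc e}, {Yb e, W1 e}, {Yb e, W2 e}, {W1 e, P1 e}, {W2 e, P2 e}})"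

end

theory Submission
  imports Defs "HOL-Library.Transitive_Closure_Table"
begin

text \<open>Take l edges F of the edge-induced forest and let F' consist of the four edges
  y^b w^1, y^b w^2, z_u y^c, z_v y^c of every uv in F, so |F'| = 4l. F' is acyclic: a path
  from z_u to y^c avoiding z_u y^c would project to a u-v path in F avoiding uv.
  Contracting an acyclic edge set whose vertices lie in a vertex cover D shrinks the image
  of D by |F'|. Taking for D all z_u, w^1, w^2, the y^a of the edges outside F and the
  y^b, y^c of the edges in F gives a cover of G' of size |V| + 3|E| + l, hence
  vc(G'/F') \<le> |V| + 3|E| - 3l, while the pendant edges z_u p_u, y^a y^c, w^1 p^1, w^2 p^2
  form a matching of size |V| + 3|E|, so vc(G') \<ge> |V| + 3|E|.\<close>

definition adj :: "'a set set \<Rightarrow> ('a \<times> 'a) set" where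
  "adj F = {(a, b). {a, b} \<in> F}"

lemma ccomp_adj: "ccomp F x = {y. (x, y) \<in> (adj F)\<^sup>*}"
  by (simp add: ccomp_def adj_def)

lemma sym_adj: "sym (adj F)"
  by (auto simp: sym_def adj_def insert_commute)

lemma adj_rtrancl_sym: "(x, y) \<in> (adj F)\<^sup>* \<Longrightarrow> (y, x) \<in> (adj F)\<^sup>*"
  by (meson sym_adj sym_rtrancl symD)

lemma adj_rtrancl_mono: "F \<subseteq> G \<Longrightarrow> (adj F)\<^sup>* \<subseteq> (adj G)\<^sup>*"
  by (rule rtrancl_mono) (auto simp: adj_def)

lemma ccomp_self: "x \<in> ccomp F x"
  by (simp add: ccomp_adj)

lemma ccomp_eq_iff: "ccomp F x = ccomp F y \<longleftrightarrow> (x, y) \<in> (adj F)\<^sup>*"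
proof
  assume "ccomp F x = ccomp F y"
  then have "y \<in> ccomp F x" using ccomp_self[of y F] by simp
  then show "(x, y) \<in> (adj F)\<^sup>*" by (simp add: ccomp_adj)
next
  assume "(x, y) \<in> (adj F)\<^sup>*"
  with adj_rtrancl_sym[OF this] show "ccomp F x = ccomp F y"
    unfolding ccomp_adj by (auto intro: rtrancl_trans)
qed

lemma adj_rtrancl_isolated:
  assumes "(x, y) \<in> (adj F)\<^sup>*" "y \<notin> \<Union>F"
  shows "x = y"
  using assms by (cases rule: rtranclE) (auto simp: adj_def)

lemma ccomp_isolated: "x \<notin> \<Union>F \<Longrightarrow> ccomp F x = {x}"
  using adj_rtrancl_isolated[OF adj_rtrancl_sym] by (auto simp: ccomp_adj)

lemma rtrancl_project:
  assumes "\<And>a b. (a, b) \<in> r \<Longrightarrow> (f a, f b) \<in> s\<^sup>*" "(x, y) \<in> r\<^sup>*"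
  shows "(f x, f y) \<in> s\<^sup>*"
  using assms(2) by induction (auto intro: rtrancl_trans dest: assms(1))

lemma cycle_of_path:
  assumes "(u, v) \<in> (adj F)\<^sup>*" "u \<noteq> v" "{u, v} \<notin> F"
  shows "\<exists>vs. is_cycle (insert {u, v} F) vs \<and> set vs \<subseteq> insert u (\<Union>F)"
proof -
  let ?p = "\<lambda>a b. {a, b} \<in> F"
  have "?p\<^sup>*\<^sup>* u v" using assms(1) by (simp add: adj_def rtranclp_rtrancl_eq)
  then obtain xs0 where "rtrancl_path ?p u xs0 v" by (auto simp: rtranclp_eq_rtrancl_path)
  then obtain xs where path: "rtrancl_path ?p u xs v" and dist: "distinct (u # xs)"
    by (rule rtrancl_path_distinct)
  have "xs \<noteq> []" using path assms(2) by (cases rule: rtrancl_path.cases) auto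
  then have last: "last xs = v" using rtrancl_path_last[OF path] by simp
  have step: "{(u # xs) ! i, xs ! i} \<in> F" if "i < length xs" for i
    using rtrancl_path_nth[OF path that] .
  have "length xs \<noteq> 1"
  proof
    assume "length xs = 1"
    then have "xs = [v]" using last by (cases xs) auto
    then show False using step[of 0] assms(3) by simp
  qed
  moreover have "length xs \<noteq> 0" using \<open>xs \<noteq> []\<close> by simp
  ultimately have len: "length xs \<ge> 2" by linarith
  have "is_cycle (insert {u, v} F) (u # xs)"
    unfolding is_cycle_def
  proof (intro conjI allI impI)
    fix i assume i: "i < length (u # xs)"
    show "{(u # xs) ! i, (u # xs) ! ((i + 1) mod length (u # xs))} \<in> insert {u, v} F"
    proof (cases "i < length xs")
      case True
      then show ?thesis using step[OF True] by simp
    next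
      case False
      with i have "i = length xs" by simp
      then show ?thesis using last \<open>xs \<noteq> []\<close> by (simp add: last_conv_nth insert_commute)
    qed
  qed (use len dist in auto)
  moreover have "set xs \<subseteq> \<Union>F"
  proof
    fix x assume "x \<in> set xs"
    then obtain i where "i < length xs" "x = xs ! i" by (auto simp: in_set_conv_nth)
    then show "x \<in> \<Union>F" using step[of i] by blast
  qed
  ultimately show ?thesis by fastforce
qed

definition acyclic_edges :: "'a set set \<Rightarrow> bool" where
  "acyclic_edges F \<longleftrightarrow> (\<forall>e\<in>F. \<exists>a b. e = {a, b} \<and> a \<noteq> b) \<and>
     (\<forall>a b. {a, b} \<in> F \<longrightarrow> (a, b) \<notin> (adj (F - {{a, b}}))\<^sup>*)"

lemma acyclic_edges_subset:
  assumes "acyclic_edges F" "G \<subseteq> F"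
  shows "acyclic_edges G"
  unfolding acyclic_edges_def
proof (intro conjI allI impI)
  show "\<forall>e\<in>G. \<exists>a b. e = {a, b} \<and> a \<noteq> b" using assms by (auto simp: acyclic_edges_def)
  fix a b assume "{a, b} \<in> G"
  then have "(a, b) \<notin> (adj (F - {{a, b}}))\<^sup>*" using assms by (auto simp: acyclic_edges_def)
  moreover have "(adj (G - {{a, b}}))\<^sup>* \<subseteq> (adj (F - {{a, b}}))\<^sup>*"
    using assms(2) by (intro adj_rtrancl_mono) blast
  ultimately show "(a, b) \<notin> (adj (G - {{a, b}}))\<^sup>*" by blast
qed

lemma card_edge_if_acyclic_edges: "acyclic_edges F \<Longrightarrow> e \<in> F \<Longrightarrow> card e = 2"
  by (auto simp: acyclic_edges_def card_2_iff)

lemma acyclic_edges_if_forest: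
  assumes "forest W H" "F \<subseteq> H" "\<Union>F \<subseteq> W" "\<forall>e\<in>F. \<exists>a b. e = {a, b} \<and> a \<noteq> b"
  shows "acyclic_edges F"
  unfolding acyclic_edges_def
proof (intro conjI assms(4) allI impI notI)
  fix a b assume ab: "{a, b} \<in> F" and path: "(a, b) \<in> (adj (F - {{a, b}}))\<^sup>*"
  have "a \<noteq> b" using ab assms(4) by (metis doubleton_eq_iff insert_absorb2)
  then obtain vs where cycle: "is_cycle (insert {a, b} (F - {{a, b}})) vs"
      and vs: "set vs \<subseteq> insert a (\<Union>(F - {{a, b}}))"
    using cycle_of_path[OF path] by blast
  have "insert {a, b} (F - {{a, b}}) = F" using ab by blast
  with cycle have "is_cycle F vs" by simp
  moreover have "set vs \<subseteq> \<Union>F" using vs ab by blast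
  ultimately have "is_cycle H vs" "set vs \<subseteq> W"
    using assms(2,3) by (auto simp: is_cycle_def)
  then show False using assms(1) by (auto simp: forest_def)
qed

text \<open>Every component of the larger graph is the union of the components of F it contains;
  this merging map identifies the distinct components of a and b.\<close>
lemma card_ccomp_image_insert_less:
  assumes "finite D" "a \<in> D" "b \<in> D" "ccomp F a \<noteq> ccomp F b"
  shows "card (ccomp (insert {a, b} F) ` D) < card (ccomp F ` D)"
proof -
  define G where "G = insert {a, b} F"
  define merge where "merge C = \<Union>(ccomp G ` C)" for C
  have merge_ccomp: "merge (ccomp F x) = ccomp G x" for x
  proof -
    have "ccomp G y = ccomp G x" if "y \<in> ccomp F x" for y
    proof -
      have "(x, y) \<in> (adj G)\<^sup>*"
        using that adj_rtrancl_mono[of F G] by (auto simp: G_def ccomp_adj)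
      then show ?thesis using adj_rtrancl_sym by (simp add: ccomp_eq_iff)
    qed
    then show ?thesis unfolding merge_def using ccomp_self[of x F] by blast
  qed
  have "ccomp G a = ccomp G b"
    unfolding ccomp_eq_iff by (rule r_into_rtrancl) (simp add: adj_def G_def)
  then have "\<not> inj_on merge (ccomp F ` D)"
    using assms(2-4) by (auto simp: inj_on_def merge_ccomp)
  then have "card (merge ` ccomp F ` D) \<noteq> card (ccomp F ` D)"
    using assms(1) by (simp add: inj_on_iff_eq_card)
  moreover have "merge ` ccomp F ` D = ccomp G ` D"
    by (simp add: image_image merge_ccomp)
  ultimately show ?thesis
    using card_image_le[of "ccomp F ` D" merge] assms(1) by (simp add: G_def)
qed

lemma card_ccomp_image_acyclic:
  assumes "acyclic_edges F" "finite F" "\<Union>F \<subseteq> D" "finite D"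
  shows "card (ccomp F ` D) + card F \<le> card D"
  using assms(2,1,3,4)
proof (induction F rule: finite_induct)
  case empty
  have "card (ccomp {} ` D) = card ((\<lambda>x. {x}) ` D)"
    by (simp add: ccomp_isolated)
  also have "\<dots> = card D" by (rule card_image) (simp add: inj_on_def)
  finally show ?case by simp
next
  case (insert e F)
  obtain a b where e: "e = {a, b}" "a \<noteq> b"
    using insert.prems(1) by (auto simp: acyclic_edges_def)
  have "(a, b) \<notin> (adj F)\<^sup>*"
    using insert.prems(1) insert.hyps(2) by (auto simp: acyclic_edges_def e)
  then have "card (ccomp (insert {a, b} F) ` D) < card (ccomp F ` D)"
    using insert.prems e by (intro card_ccomp_image_insert_less) (auto simp: ccomp_eq_iff)
  moreover have "card (ccomp F ` D) + card F \<le> card D"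
    using insert.prems acyclic_edges_subset[OF insert.prems(1) subset_insertI] by (intro insert.IH) auto
  ultimately show ?case using insert.hyps e by simp
qed

lemma vertex_cover_contract:
  "vertex_cover V E D \<Longrightarrow> vertex_cover (contract_V V F) (contract_E E F) (ccomp F ` D)"
  by (fastforce simp: vertex_cover_def contract_V_def contract_E_def)

lemma finite_vertex_cover_cards: "finite V \<Longrightarrow> finite {card C | C. vertex_cover V E C}"
  by (rule finite_subset[of _ "card ` Pow V"]) (auto simp: vertex_cover_def)

lemma vc_le: "finite V \<Longrightarrow> vertex_cover V E C \<Longrightarrow> vc V E \<le> card C"
  unfolding vc_def by (auto intro: Min_le finite_vertex_cover_cards)

lemma vc_attained:
  assumes "finite V" "vertex_cover V E D"
  obtains C where "vertex_cover V E C" "vc V E = card C"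
proof -
  have "vc V E \<in> {card C | C. vertex_cover V E C}"
    unfolding vc_def using assms by (intro Min_in finite_vertex_cover_cards) auto
  then show ?thesis using that by blast
qed

text \<open>The edges {x, m x} for x \<in> X form a matching; every cover picks a distinct
  endpoint from each of them.\<close>
lemma card_le_vertex_cover_if_matching:
  assumes "inj_on m X" "X \<inter> m ` X = {}" "\<And>x. x \<in> X \<Longrightarrow> {x, m x} \<in> E"
    and "finite V" "vertex_cover V E C"
  shows "card X \<le> card C"
proof -
  define pick where "pick x = (if x \<in> C then x else m x)" for x
  have "pick ` X \<subseteq> C"
    using assms(3,5) by (fastforce simp: pick_def vertex_cover_def)
  moreover have "inj_on pick X"
    using assms(1,2) by (auto simp: inj_on_def pick_def split: if_splits)
  moreover have "finite C" using assms(4,5) by (auto simp: vertex_cover_def finite_subset)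
  ultimately show ?thesis by (simp add: card_inj_on_le)
qed

lemma card_le_vc_if_matching:
  assumes "inj_on m X" "X \<inter> m ` X = {}" "\<And>x. x \<in> X \<Longrightarrow> {x, m x} \<in> E"
    and "finite V" "vertex_cover V E D"
  shows "card X \<le> vc V E"
  using assms by (metis card_le_vertex_cover_if_matching vc_attained)

lemma finite_edges_if_graph: "graph V E \<Longrightarrow> finite E"
  unfolding graph_def by (rule finite_subset[of _ "Pow V"]) auto

lemma edge_subset_if_graph:
  assumes "graph V E" "e \<in> E"
  shows "e \<subseteq> V"
proof -
  obtain u v where "e = {u, v}" "u \<in> V" "v \<in> V" using assms unfolding graph_def by meson
  then show ?thesis by simp
qed

lemma acyclic_edges_if_edge_induced_forest:
  assumes "graph V E" "edge_induced_forest V E l"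
  obtains F where "F \<subseteq> E" "card F = l" "acyclic_edges F"
proof -
  obtain F1 where F1: "F1 \<subseteq> E" "l \<le> card F1" "forest (\<Union>F1) (induced_edges E (\<Union>F1))"
    using assms(2) by (auto simp: edge_induced_forest_def)
  then obtain F where F: "F \<subseteq> F1" "card F = l"
    by (meson obtain_subset_with_card_n)
  have "acyclic_edges F"
  proof (rule acyclic_edges_if_forest[OF F1(3)])
    show "F \<subseteq> induced_edges E (\<Union>F1)" using F(1) F1(1) by (auto simp: induced_edges_def)
    show "\<Union>F \<subseteq> \<Union>F1" using F(1) by blast
    show "\<forall>e\<in>F. \<exists>a b. e = {a, b} \<and> a \<noteq> b"
    proof
      fix e assume "e \<in> F"
      then have "e \<in> E" using F(1) F1(1) by blast
      then obtain u v where "e = {u, v}" "u \<noteq> v" using assms(1) unfolding graph_def by meson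
      then show "\<exists>a b. e = {a, b} \<and> a \<noteq> b" by blast
    qed
  qed
  then show ?thesis using that F F1(1) by blast
qed

definition gadget :: "'a set \<Rightarrow> 'a node set set" where
  "gadget e = {{Yb e, W1 e}, {Yb e, W2 e}} \<union> (\<lambda>w. {Zv w, Yc e}) ` e"

lemma gadget_subset_constr_E: "e \<in> E \<Longrightarrow> gadget e \<subseteq> constr_E V E"
  unfolding gadget_def constr_E_def
  by (intro subsetI; elim UnE imageE insertE emptyE; simp add: doubleton_eq_iff; blast)

lemma card_gadget: "finite e \<Longrightarrow> card (gadget e) = card e + 2"
proof -
  assume "finite e"
  moreover have "card ((\<lambda>w. {Zv w, Yc e}) ` e) = card e"
    by (rule card_image) (auto simp: inj_on_def doubleton_eq_iff)
  moreover have "{{Yb e, W1 e}, {Yb e, W2 e}} \<inter> (\<lambda>w. {Zv w, Yc e}) ` e = {}"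
    by (auto simp: doubleton_eq_iff)
  ultimately show ?thesis
    by (simp add: gadget_def card_Un_disjoint doubleton_eq_iff)
qed

lemma finite_gadgets:
  assumes "finite F" "\<forall>e\<in>F. card e = 2"
  shows "finite (\<Union>(gadget ` F))"
proof -
  have "finite e" if "e \<in> F" for e
    using assms(2) that card.infinite by fastforce
  then show ?thesis using assms(1) by (simp add: gadget_def)
qed

lemma card_gadgets:
  assumes "finite F" "\<forall>e\<in>F. card e = 2"
  shows "card (\<Union>(gadget ` F)) = 4 * card F"
proof -
  have finite: "finite e" if "e \<in> F" for e
    using assms(2) that card.infinite by fastforce
  have "gadget e \<inter> gadget e' = {}" if "e \<noteq> e'" for e e' :: "'a set"
    using that by (auto simp: gadget_def doubleton_eq_iff)
  then have "card (\<Union>(gadget ` F)) = (\<Sum>e\<in>F. card (gadget e))"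
    using assms(1) finite by (intro card_UN_disjoint) (auto simp: gadget_def)
  also have "\<dots> = (\<Sum>e\<in>F. 4)"
    using assms(2) finite by (intro sum.cong) (auto simp: card_gadget)
  finally show ?thesis by simp
qed

text \<open>A path avoiding the edge z_a y^c of uv = {a, b} is mapped to a path of F avoiding {a, b}:
  z_w goes to w, y^c of {a, b} goes to b, y^c of any other edge to one of its endpoints, and
  all other nodes to b.\<close>
lemma gadgets_Zv_Yc_not_connected:
  assumes F: "\<forall>e\<in>F. card e = 2" and "{a, b} \<in> F" "a \<noteq> b"
    and no_path: "(a, b) \<notin> (adj (F - {{a, b}}))\<^sup>*"
  shows "(Zv a, Yc {a, b}) \<notin> (adj (\<Union>(gadget ` F) - {{Zv a, Yc {a, b}}}))\<^sup>*"
proof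
  define e where "e = {a, b}"
  define R where "R = adj (F - {e})"
  define proj where "proj n = (case n of Zv w \<Rightarrow> w
    | Yc e' \<Rightarrow> if e' = e then b else (SOME w. w \<in> e') | _ \<Rightarrow> b)" for n
  have Zv_Yc: "(w, proj (Yc e')) \<in> R\<^sup>*"
    if e': "e' \<in> F" "w \<in> e'" "{Zv w, Yc e'} \<noteq> {Zv a, Yc e}" for w e'
  proof (cases "e' = e")
    case True
    with e' have "w = b" by (auto simp: e_def)
    with True show ?thesis by (simp add: proj_def)
  next
    case False
    let ?s = "SOME w. w \<in> e'"
    have proj: "proj (Yc e') = ?s" using False by (simp add: proj_def)
    have "?s \<in> e'" using e'(2) by (rule someI)
    moreover obtain p q where "e' = {p, q}" using F e'(1) card_2_iff[of e'] by blast
    ultimately consider "w = ?s" | "{w, ?s} = e'" using e'(2) by (auto simp: insert_commute)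
    then show ?thesis
    proof cases
      case 2
      then have "(w, ?s) \<in> R" using False e'(1) by (simp add: R_def adj_def)
      then show ?thesis unfolding proj by (rule r_into_rtrancl)
    qed (simp add: proj)
  qed
  have step: "(proj x, proj y) \<in> R\<^sup>*" if xy: "(x, y) \<in> adj (\<Union>(gadget ` F) - {{Zv a, Yc e}})" for x y
  proof -
    obtain e' where e': "e' \<in> F" "{x, y} \<in> gadget e'" "{x, y} \<noteq> {Zv a, Yc e}"
      using xy unfolding adj_def by blast
    then consider "{x, y} = {Yb e', W1 e'} \<or> {x, y} = {Yb e', W2 e'}"
      | w where "w \<in> e'" "{x, y} = {Zv w, Yc e'}"
      unfolding gadget_def by blast
    then show ?thesis
    proof cases
      case 1
      then have "proj x = b \<and> proj y = b" by (auto simp: doubleton_eq_iff proj_def)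
      then show ?thesis by simp
    next
      case 2
      have "(w, proj (Yc e')) \<in> R\<^sup>*" using Zv_Yc e' 2 by simp
      moreover have "proj (Zv w) = w" by (simp add: proj_def)
      moreover have "(x = Zv w \<and> y = Yc e') \<or> (x = Yc e' \<and> y = Zv w)"
        using 2 by (simp add: doubleton_eq_iff)
      ultimately show ?thesis
        unfolding R_def by (metis adj_rtrancl_sym)
    qed
  qed
  assume "(Zv a, Yc {a, b}) \<in> (adj (\<Union>(gadget ` F) - {{Zv a, Yc {a, b}}}))\<^sup>*"
  then have "(proj (Zv a), proj (Yc e)) \<in> R\<^sup>*"
    unfolding e_def[symmetric] by (rule rtrancl_project[rotated]) (rule step)
  then show False using no_path by (simp add: proj_def R_def e_def)
qed

lemma acyclic_edges_gadgets:
  assumes acyclic: "acyclic_edges F"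
  shows "acyclic_edges (\<Union>(gadget ` F))"
  unfolding acyclic_edges_def
proof (intro conjI allI impI notI)
  let ?T = "\<Union>(gadget ` F)"
  show "\<forall>e\<in>?T. \<exists>a b. e = {a, b} \<and> a \<noteq> b" by (auto simp: gadget_def)
  fix x y assume "{x, y} \<in> ?T" and path: "(x, y) \<in> (adj (?T - {{x, y}}))\<^sup>*"
  then obtain e where e: "e \<in> F" "{x, y} \<in> gadget e" by blast
  then consider (leaf) u where "u \<in> {W1 e, W2 e}" "{x, y} = {Yb e, u}"
    | (hub) w where "w \<in> e" "{x, y} = {Zv w, Yc e}"
    by (auto simp: gadget_def)
  then show False
  proof cases
    case leaf
    then have "u \<notin> \<Union>(?T - {{x, y}})" by (auto simp: gadget_def doubleton_eq_iff)
    then show False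
      using leaf adj_rtrancl_isolated[OF path] adj_rtrancl_isolated[OF adj_rtrancl_sym[OF path]]
      by (auto simp: doubleton_eq_iff)
  next
    case hub
    have two: "\<forall>e\<in>F. card e = 2" using acyclic card_edge_if_acyclic_edges by blast
    then obtain p q where "e = {p, q}" "p \<noteq> q" using e(1) card_2_iff[of e] by blast
    then obtain w' where w': "e = {w, w'}" "w \<noteq> w'" using hub(1) by (cases "w = p") auto
    then have "(w, w') \<notin> (adj (F - {{w, w'}}))\<^sup>*"
      using acyclic e(1) by (auto simp: acyclic_edges_def)
    then have "(Zv w, Yc e) \<notin> (adj (?T - {{Zv w, Yc e}}))\<^sup>*"
      using gadgets_Zv_Yc_not_connected[OF two] e(1) w' by simp
    moreover have "(x, y) \<in> (adj (?T - {{Zv w, Yc e}}))\<^sup>*" using path hub(2) by simp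
    ultimately show False
      using hub(2) by (auto simp: doubleton_eq_iff dest: adj_rtrancl_sym)
  qed
qed

definition forest_cover :: "'a set \<Rightarrow> 'a set set \<Rightarrow> 'a set set \<Rightarrow> 'a node set" where
  "forest_cover V E F = Zv ` V \<union> W1 ` E \<union> W2 ` E \<union> Ya ` (E - F) \<union> Yb ` F \<union> Yc ` F"

lemma constr_E_cases:
  assumes "x \<in> constr_E V E"
  obtains (pendant) u where "u \<in> V" "x = {Zv u, Pv u}"
    | (incidence) e u where "e \<in> E" "u \<in> e" "x = {Zv u, Yc e}"
    | (gadget) e where "e \<in> E" "x \<in> {{Ya e, Yb e}, {Ya e, Yc e}, {Yb e, W1 e}, {Yb e, W2 e},
        {W1 e, P1 e}, {W2 e, P2 e}}"
  using assms unfolding constr_E_def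
proof (elim UnE UN_E)
  assume "x \<in> {{Zv u, Pv u} | u. u \<in> V}"
  then obtain u where "u \<in> V" "x = {Zv u, Pv u}" by blast
  then show thesis by (rule pendant)
next
  fix e assume "e \<in> E" "x \<in> {{Zv u, Yc e} | u. u \<in> e}"
  moreover from this(2) obtain u where "u \<in> e" "x = {Zv u, Yc e}" by blast
  ultimately show thesis by (intro incidence)
qed (rule gadget)

lemma vertex_cover_forest_cover:
  assumes "graph V E" "F \<subseteq> E"
  shows "vertex_cover (constr_V V E) (constr_E V E) (forest_cover V E F)"
  unfolding vertex_cover_def
proof (intro conjI ballI)
  show "forest_cover V E F \<subseteq> constr_V V E"
    using assms(2) by (auto simp: forest_cover_def constr_V_def)
  fix x assume "x \<in> constr_E V E"
  then show "x \<inter> forest_cover V E F \<noteq> {}"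
  proof (cases rule: constr_E_cases)
    case (gadget e)
    have "W1 e \<in> forest_cover V E F" "W2 e \<in> forest_cover V E F"
      "Yb e \<in> forest_cover V E F \<or> Ya e \<in> forest_cover V E F"
      "Yc e \<in> forest_cover V E F \<or> Ya e \<in> forest_cover V E F"
      using gadget(1) by (auto simp: forest_cover_def)
    with gadget(2) show ?thesis by (elim insertE emptyE) blast+
  qed (auto simp: forest_cover_def dest: edge_subset_if_graph[OF assms(1)])
qed

lemma card_forest_cover:
  assumes "finite V" "finite E" "F \<subseteq> E"
  shows "card (forest_cover V E F) = card V + 3 * card E + card F"
proof -
  have "finite F" using assms(2,3) by (rule finite_subset[rotated])
  have card_inj_image: "inj f \<Longrightarrow> card (f ` A) = card A" for f :: "'b \<Rightarrow> 'a node" and A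
    by (simp add: card_image inj_on_subset)
  have "card (forest_cover V E F) = card (Zv ` V) + card (W1 ` E) + card (W2 ` E) +
      card (Ya ` (E - F)) + card (Yb ` F) + card (Yc ` F)"
    unfolding forest_cover_def using assms(1,2) \<open>finite F\<close>
    by (subst card_Un_disjoint; auto)+
  also have "\<dots> = card V + 3 * card E + card F"
    using assms card_mono[OF assms(2,3)]
    by (simp add: card_inj_image inj_def card_Diff_subset \<open>finite F\<close>)
  finally show ?thesis .
qed

lemma gadgets_subset_forest_cover:
  "graph V E \<Longrightarrow> F \<subseteq> E \<Longrightarrow> \<Union>(\<Union>(gadget ` F)) \<subseteq> forest_cover V E F"
  using edge_subset_if_graph by (fastforce simp: gadget_def forest_cover_def)

fun pendant_mate :: "'a node \<Rightarrow> 'a node" where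
  "pendant_mate (Zv w) = Pv w"
| "pendant_mate (Ya e) = Yc e"
| "pendant_mate (W1 e) = P1 e"
| "pendant_mate (W2 e) = P2 e"
| "pendant_mate n = n"

lemma card_le_vc_constr:
  assumes "graph V E"
  shows "card V + 3 * card E \<le> vc (constr_V V E) (constr_E V E)"
proof -
  have finite: "finite V" "finite E"
    using assms finite_edges_if_graph by (auto simp: graph_def)
  let ?X = "forest_cover V E {}"
  have "card ?X \<le> vc (constr_V V E) (constr_E V E)"
  proof (rule card_le_vc_if_matching)
    show "inj_on pendant_mate ?X" by (auto simp: inj_on_def forest_cover_def)
    show "?X \<inter> pendant_mate ` ?X = {}" by (auto simp: forest_cover_def)
    show "{x, pendant_mate x} \<in> constr_E V E" if "x \<in> ?X" for x
      using that unfolding forest_cover_def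
      by (elim UnE imageE; auto simp: constr_E_def doubleton_eq_iff)
    show "finite (constr_V V E)" using finite by (simp add: constr_V_def)
    show "vertex_cover (constr_V V E) (constr_E V E) ?X"
      using assms by (rule vertex_cover_forest_cover) simp
  qed
  then show ?thesis using card_forest_cover[OF finite] by simp
qed

theorem lemma7:
  fixes V :: "'a set" and E :: "'a set set" and l :: nat
  assumes "graph V E"
    and "edge_induced_forest V E l"
  shows "contraction_vc (constr_V V E) (constr_E V E) (4 * l) (3 * l)"
proof -
  obtain F where F: "F \<subseteq> E" "card F = l" "acyclic_edges F"
    using acyclic_edges_if_edge_induced_forest[OF assms] .
  have finite: "finite V" "finite E" "finite F"
    using assms(1) finite_edges_if_graph F(1) by (auto simp: graph_def intro: finite_subset)
  have two: "\<forall>e\<in>F. card e = 2" using F(3) card_edge_if_acyclic_edges by blast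
  let ?F' = "\<Union>(gadget ` F)" and ?D = "forest_cover V E F"
  let ?V' = "constr_V V E" and ?E' = "constr_E V E"
  have card_F': "card ?F' = 4 * l" using card_gadgets[OF finite(3) two] F(2) by simp
  have "finite ?F'" using finite(3) two by (rule finite_gadgets)
  moreover have "finite ?D" using finite by (simp add: forest_cover_def)
  ultimately have "card (ccomp ?F' ` ?D) + card ?F' \<le> card ?D"
    using acyclic_edges_gadgets[OF F(3)] gadgets_subset_forest_cover[OF assms(1) F(1)]
    by (intro card_ccomp_image_acyclic)
  moreover have "vc (contract_V ?V' ?F') (contract_E ?E' ?F') \<le> card (ccomp ?F' ` ?D)"
    using finite vertex_cover_forest_cover[OF assms(1) F(1)]
    by (intro vc_le vertex_cover_contract) (auto simp: contract_V_def constr_V_def)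
  moreover have "card V + 3 * card E \<le> vc ?V' ?E'" by (rule card_le_vc_constr[OF assms(1)])
  moreover have "?F' \<subseteq> ?E'" using F(1) gadget_subset_constr_E by blast
  ultimately show ?thesis
    unfolding contraction_vc_def
    using card_F' card_forest_cover[OF finite(1,2) F(1)] F(2)
    by (intro exI[of _ ?F']) auto
qed

end
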